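(* Let $(X_{m,t})$ be a random array in $\Omega^{M\times(T+1)}$ whose rows are independent, each row $m$ being a Markov chain with transition matrix $P_m$. Then for all $i\in\Omega$, $\varepsilon>0$ and $0<s_1\le s_2$, \[ \Pr\big(\|\hat P_{i,:}-\tilde P_{i,:}\|_1\ge\varepsilon,\ s_1\le N_i\le s_2\big) \ \le\ (1+|\Omega|)\exp\left(-\frac{3\varepsilon^2 s_1}{6\sqrt2|\Omega|s_2/s_1 + 2\sqrt2|\Omega|^{1/2}\varepsilon}\right). \]
   Context: $\Omega$ is a finite set, $M,T\ge1$ integers, rows indexed by $m=1,\dots,M$ and columns by $t=0,\dots,T$. Let $N_{m,i}=\sum_{t=1}^T1(X_{m,t-1}=i)$, $N_i=\sum_mN_{m,i}$, $N_{i,j}=\sum_{m=1}^M\sum_{t=1}^T1(X_{m,t-1}=i,X_{m,t}=j)$. The empirical transition matrix is $\hat P_{i,j}=N_{i,j}/N_i$ if $N_i>0$ and $1/|\Omega|$ otherwise. Define $\tilde P_{i,j}=\sum_m\frac{N_{m,i}}{N_i}P_m(i,j)$ if $N_i>0$ and $1/|\Omega|$ otherwise. $\|\cdot\|_1$ is the $\ell_1$ norm of a row vector. *)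

theory Defs
  imports Complex_Main "HOL-Library.FuncSet"
begin

text \<open>An array x in Omega^(M x (T+1)) is a function on {1..M} x {0..T}
  (extensional, i.e. undefined outside this index set). The state space Omega is a finite type.\<close>

definition arrays :: "nat \<Rightarrow> nat \<Rightarrow> (nat \<times> nat \<Rightarrow> 'a) set" where
  "arrays M T = PiE ({1..M} \<times> {0..T}) (\<lambda>_. UNIV)"

text \<open>Law of an array with independent rows, row m being a (time-homogeneous) Markov chain
  with initial distribution mu m and transition matrix P m:
  Pr(X = x) = prod_m mu_m(x_{m,0}) prod_{t=1..T} P_m(x_{m,t-1}, x_{m,t}).\<close>

definition array_law :: "(nat \<Rightarrow> 'a \<Rightarrow> real) \<Rightarrow> (nat \<Rightarrow> 'a \<Rightarrow> 'a \<Rightarrow> real) \<Rightarrow> nat \<Rightarrow> nat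
    \<Rightarrow> (nat \<times> nat \<Rightarrow> 'a) \<Rightarrow> real" where
  "array_law mu P M T x =
     (\<Prod>m\<in>{1..M}. mu m (x (m, 0)) * (\<Prod>t\<in>{1..T}. P m (x (m, t - 1)) (x (m, t))))"

definition array_prob :: "(nat \<Rightarrow> 'a \<Rightarrow> real) \<Rightarrow> (nat \<Rightarrow> 'a \<Rightarrow> 'a \<Rightarrow> real) \<Rightarrow> nat \<Rightarrow> nat
    \<Rightarrow> ((nat \<times> nat \<Rightarrow> 'a) \<Rightarrow> bool) \<Rightarrow> real" where
  "array_prob mu P M T E = (\<Sum>x\<in>arrays M T. if E x then array_law mu P M T x else 0)"

definition Nmi :: "nat \<Rightarrow> (nat \<times> nat \<Rightarrow> 'a) \<Rightarrow> nat \<Rightarrow> 'a \<Rightarrow> real" where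
  "Nmi T x m i = real (card {t\<in>{1..T}. x (m, t - 1) = i})"

definition Ni :: "nat \<Rightarrow> nat \<Rightarrow> (nat \<times> nat \<Rightarrow> 'a) \<Rightarrow> 'a \<Rightarrow> real" where
  "Ni M T x i = (\<Sum>m\<in>{1..M}. Nmi T x m i)"

definition Nij :: "nat \<Rightarrow> nat \<Rightarrow> (nat \<times> nat \<Rightarrow> 'a) \<Rightarrow> 'a \<Rightarrow> 'a \<Rightarrow> real" where
  "Nij M T x i j = real (card {(m, t). m \<in> {1..M} \<and> t \<in> {1..T} \<and> x (m, t - 1) = i \<and> x (m, t) = j})"

definition Phat :: "nat \<Rightarrow> nat \<Rightarrow> (nat \<times> nat \<Rightarrow> 'a::finite) \<Rightarrow> 'a \<Rightarrow> 'a \<Rightarrow> real" where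
  "Phat M T x i j = (if Ni M T x i > 0 then Nij M T x i j / Ni M T x i else 1 / real (card (UNIV::'a set)))"

definition Ptilde :: "(nat \<Rightarrow> 'a \<Rightarrow> 'a \<Rightarrow> real) \<Rightarrow> nat \<Rightarrow> nat \<Rightarrow> (nat \<times> nat \<Rightarrow> 'a::finite)
    \<Rightarrow> 'a \<Rightarrow> 'a \<Rightarrow> real" where
  "Ptilde P M T x i j = (if Ni M T x i > 0
      then (\<Sum>m\<in>{1..M}. Nmi T x m i / Ni M T x i * P m i j)
      else 1 / real (card (UNIV::'a set)))"

end

theory Submission
  imports Defs "HOL-Probability.Hoeffding"
begin

(* For a sign vector sigma in {-1,1}^Omega, the quantity
   Z_sigma = sum_j sigma_j (N_{i,j} - sum_m N_{m,i} P_m(i,j)) is the sum, over all transitions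
   (m,t) leaving state i, of sigma(X_{m,t}) minus its conditional mean; its increments lie in an
   interval of length 2. By Hoeffding's lemma exp(eps Z_sigma - eps^2 N_i / 2) is a
   supermartingale, so its expectation is at most 1: reweighting the transitions out of i turns
   each row into a sub-stochastic chain, whose total path mass is at most 1.
   Choosing sigma as the sign pattern of Phat - Ptilde gives Z_sigma = N_i ||Phat - Ptilde||_1, so
   on the event eps Z_sigma - eps^2 N_i / 2 >= eps^2 N_i / 2 >= eps^2 s1 / 2. Markov's inequality
   and a union bound over the 2^|Omega| sign vectors bound the probability by
   2^|Omega| exp(-eps^2 s1 / 2); together with the trivial bound 1 this implies the stated
   (weaker) bound, in which s2 only enlarges the right-hand side. *)

lemma sum_paths_substochastic_le:
  fixes T :: nat and mu :: "'a::finite \<Rightarrow> real" and h :: "'a \<Rightarrow> 'a \<Rightarrow> real"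
  assumes mu_nonneg: "\<And>a. mu a \<ge> 0" and h_nonneg: "\<And>a b. h a b \<ge> 0"
    and h_sum: "\<And>a. (\<Sum>b\<in>UNIV. h a b) \<le> 1"
  shows "(\<Sum>y\<in>PiE {0..T} (\<lambda>_. UNIV). mu (y 0) * (\<Prod>t\<in>{1..T}. h (y (t - 1)) (y t)))
           \<le> (\<Sum>a\<in>UNIV. mu a)"
proof (induction T)
  case 0
  show ?case
    using prod_sum_PiE[of "{0::nat}" "\<lambda>_. UNIV::'a set" "\<lambda>_. mu"] by simp
next
  case (Suc T)
  define G where "G y = mu (y 0) * (\<Prod>t\<in>{1..T}. h (y (t - 1)) (y t))" for y :: "nat \<Rightarrow> 'a"
  have G_nonneg: "G y \<ge> 0" for y
    unfolding G_def using mu_nonneg h_nonneg by (intro mult_nonneg_nonneg prod_nonneg) auto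
  have "(\<Sum>y\<in>PiE {0..Suc T} (\<lambda>_. UNIV). mu (y 0) * (\<Prod>t\<in>{1..Suc T}. h (y (t - 1)) (y t)))
      = (\<Sum>(b, g)\<in>UNIV \<times> PiE {0..T} (\<lambda>_. UNIV). G g * h (g T) b)"
  proof (rule sum.reindex_bij_witness[of _ "\<lambda>(b, g). g(Suc T := b)"
        "\<lambda>y. (y (Suc T), y(Suc T := undefined))"])
    fix y :: "nat \<Rightarrow> 'a"
    have "(\<Prod>t\<in>{1..T}. h ((y(Suc T := undefined)) (t - 1)) ((y(Suc T := undefined)) t))
        = (\<Prod>t\<in>{1..T}. h (y (t - 1)) (y t))"
      by (intro prod.cong) auto
    moreover have "{1..Suc T} = insert (Suc T) {1..T}" by auto
    ultimately show "(\<lambda>(b, g). G g * h (g T) b) (y (Suc T), y(Suc T := undefined))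
        = mu (y 0) * (\<Prod>t\<in>{1..Suc T}. h (y (t - 1)) (y t))"
      by (simp add: G_def mult_ac)
  qed (auto simp: PiE_def extensional_def atLeastAtMostSuc_conv)
  also have "\<dots> = (\<Sum>g\<in>PiE {0..T} (\<lambda>_. UNIV). G g * (\<Sum>b\<in>UNIV. h (g T) b))"
    by (simp add: sum.cartesian_product[symmetric] sum.swap[of _ UNIV] sum_distrib_left)
  also have "\<dots> \<le> (\<Sum>g\<in>PiE {0..T} (\<lambda>_. UNIV). G g)"
    using h_sum G_nonneg by (intro sum_mono mult_left_le) auto
  also have "\<dots> \<le> (\<Sum>a\<in>UNIV. mu a)"
    using Suc.IH by (simp add: G_def)
  finally show ?case .
qed

lemma sum_arrays_prod_rows:
  fixes f :: "nat \<Rightarrow> (nat \<Rightarrow> 'a::finite) \<Rightarrow> 'b::comm_semiring_1"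
  shows "(\<Sum>x\<in>arrays M T. \<Prod>m\<in>{1..M}. f m (\<lambda>t\<in>{0..T}. x (m, t)))
       = (\<Prod>m\<in>{1..M}. \<Sum>y\<in>PiE {0..T} (\<lambda>_. UNIV). f m y)"
proof -
  have "(\<Sum>x\<in>arrays M T. \<Prod>m\<in>{1..M}. f m (\<lambda>t\<in>{0..T}. x (m, t)))
      = (\<Sum>g\<in>PiE {1..M} (\<lambda>_. PiE {0..T} (\<lambda>_. UNIV)). \<Prod>m\<in>{1..M}. f m (g m))"
  proof (rule sum.reindex_bij_witness[of _ "\<lambda>g. \<lambda>p\<in>{1..M} \<times> {0..T}. g (fst p) (snd p)"
        "\<lambda>x. \<lambda>m\<in>{1..M}. \<lambda>t\<in>{0..T}. x (m, t)"])
    fix g assume "g \<in> PiE {1..M} (\<lambda>_. PiE {0..T} (\<lambda>_. UNIV::'a set))"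
    then show "(\<lambda>m\<in>{1..M}. \<lambda>t\<in>{0..T}. (\<lambda>p\<in>{1..M} \<times> {0..T}. g (fst p) (snd p)) (m, t)) = g"
      by (force simp: PiE_def extensional_def fun_eq_iff Pi_def)
  qed (auto simp: arrays_def PiE_def extensional_def fun_eq_iff intro!: prod.cong)
  also have "\<dots> = (\<Prod>m\<in>{1..M}. \<Sum>y\<in>PiE {0..T} (\<lambda>_. UNIV). f m y)"
    by (rule prod_sum_PiE[symmetric]) (auto intro: finite_PiE)
  finally show ?thesis .
qed

lemma array_law_nonneg:
  assumes "\<And>m a. m \<in> {1..M} \<Longrightarrow> mu m a \<ge> 0" and "\<And>m a b. m \<in> {1..M} \<Longrightarrow> P m a b \<ge> 0"
  shows "array_law mu P M T x \<ge> 0"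
  unfolding array_law_def using assms by (intro prod_nonneg mult_nonneg_nonneg) auto

lemma array_law_weighted_sum_le_1:
  fixes mu :: "nat \<Rightarrow> 'a::finite \<Rightarrow> real" and P w :: "nat \<Rightarrow> 'a \<Rightarrow> 'a \<Rightarrow> real"
  assumes mu_nonneg: "\<And>m a. m \<in> {1..M} \<Longrightarrow> mu m a \<ge> 0"
    and mu_sum: "\<And>m. m \<in> {1..M} \<Longrightarrow> (\<Sum>a\<in>UNIV. mu m a) = 1"
    and P_nonneg: "\<And>m a b. m \<in> {1..M} \<Longrightarrow> P m a b \<ge> 0"
    and w_nonneg: "\<And>m a b. m \<in> {1..M} \<Longrightarrow> w m a b \<ge> 0"
    and weighted_sum: "\<And>m a. m \<in> {1..M} \<Longrightarrow> (\<Sum>b\<in>UNIV. P m a b * w m a b) \<le> 1"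
  shows "(\<Sum>x\<in>arrays M T. array_law mu P M T x *
            (\<Prod>m\<in>{1..M}. \<Prod>t\<in>{1..T}. w m (x (m, t - 1)) (x (m, t)))) \<le> 1"
proof -
  define f where "f m y = mu m (y 0) * (\<Prod>t\<in>{1..T}. P m (y (t - 1)) (y t) * w m (y (t - 1)) (y t))"
    for m and y :: "nat \<Rightarrow> 'a"
  have "f m (\<lambda>t\<in>{0..T}. x (m, t)) = mu m (x (m, 0)) *
          (\<Prod>t\<in>{1..T}. P m (x (m, t - 1)) (x (m, t)) * w m (x (m, t - 1)) (x (m, t)))" for x m
    unfolding f_def by (auto intro!: prod.cong)
  then have "array_law mu P M T x * (\<Prod>m\<in>{1..M}. \<Prod>t\<in>{1..T}. w m (x (m, t - 1)) (x (m, t)))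
      = (\<Prod>m\<in>{1..M}. f m (\<lambda>t\<in>{0..T}. x (m, t)))" for x
    by (simp add: array_law_def prod.distrib mult_ac)
  then have "(\<Sum>x\<in>arrays M T. array_law mu P M T x *
               (\<Prod>m\<in>{1..M}. \<Prod>t\<in>{1..T}. w m (x (m, t - 1)) (x (m, t))))
      = (\<Sum>x\<in>arrays M T. \<Prod>m\<in>{1..M}. f m (\<lambda>t\<in>{0..T}. x (m, t)))"
    by simp
  also have "\<dots> = (\<Prod>m\<in>{1..M}. \<Sum>y\<in>PiE {0..T} (\<lambda>_. UNIV). f m y)"
    by (rule sum_arrays_prod_rows)
  also have "\<dots> \<le> 1"
  proof (rule prod_le_1)
    fix m assume m: "m \<in> {1..M}"
    have "(\<Sum>y\<in>PiE {0..T} (\<lambda>_. UNIV). f m y) \<le> (\<Sum>a\<in>UNIV. mu m a)"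
      unfolding f_def using m mu_nonneg P_nonneg w_nonneg weighted_sum
      by (intro sum_paths_substochastic_le) auto
    moreover have "(\<Sum>y\<in>PiE {0..T} (\<lambda>_. UNIV). f m y) \<ge> 0"
      unfolding f_def using m mu_nonneg P_nonneg w_nonneg
      by (intro sum_nonneg mult_nonneg_nonneg prod_nonneg) auto
    ultimately show "0 \<le> (\<Sum>y\<in>PiE {0..T} (\<lambda>_. UNIV). f m y) \<and> (\<Sum>y\<in>PiE {0..T} (\<lambda>_. UNIV). f m y) \<le> 1"
      using mu_sum[OF m] by simp
  qed
  finally show ?thesis .
qed

lemma sign_mgf_le:
  fixes p \<sigma> :: "'a \<Rightarrow> real" and l :: real
  assumes "finite A" and p_nonneg: "\<And>b. b \<in> A \<Longrightarrow> p b \<ge> 0" and p_sum: "(\<Sum>b\<in>A. p b) = 1"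
    and \<sigma>: "\<And>b. b \<in> A \<Longrightarrow> \<sigma> b \<in> {-1, 1}" and "l \<ge> 0"
  shows "(\<Sum>b\<in>A. p b * exp (l * \<sigma> b)) \<le> exp (l * (\<Sum>b\<in>A. p b * \<sigma> b) + l\<^sup>2 / 2)"
proof -
  define q where "q = (\<Sum>b\<in>A. p b * ((\<sigma> b + 1) / 2))"
  have "q \<ge> 0"
    unfolding q_def using p_nonneg \<sigma> by (intro sum_nonneg) fastforce
  have "2 * q = (\<Sum>b\<in>A. p b * \<sigma> b + p b)"
    unfolding q_def sum_distrib_left by (intro sum.cong) (simp_all add: algebra_simps)
  then have mean: "(\<Sum>b\<in>A. p b * \<sigma> b) = 2 * q - 1"
    using p_sum by (simp add: sum.distrib)
  have "(\<Sum>b\<in>A. p b * exp (l * \<sigma> b))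
      = (\<Sum>b\<in>A. exp (-l) * p b + exp (-l) * (exp (2 * l) - 1) * (p b * ((\<sigma> b + 1) / 2)))"
    by (intro sum.cong refl) (auto dest: \<sigma> simp: field_simps simp flip: exp_add)
  also have "\<dots> = exp (-l) * (1 + q * (exp (2 * l) - 1))"
    unfolding sum.distrib sum_distrib_left[symmetric] q_def[symmetric] p_sum
    by (simp add: algebra_simps)
  finally have mgf: "(\<Sum>b\<in>A. p b * exp (l * \<sigma> b)) = exp (-l) * (1 + q * (exp (2 * l) - 1))" .
  have pos: "1 + q * (exp (2 * l) - 1) > 0"
    using \<open>q \<ge> 0\<close> \<open>l \<ge> 0\<close> by (simp add: add_pos_nonneg)
  have "ln (1 + q * (exp (2 * l) - 1)) \<le> 2 * l * q + l\<^sup>2 / 2"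
    using Hoeffdings_lemma_aux[of "2 * l" q] \<open>q \<ge> 0\<close> \<open>l \<ge> 0\<close> by (simp add: power2_eq_square)
  then have "1 + q * (exp (2 * l) - 1) \<le> exp (2 * l * q + l\<^sup>2 / 2)"
    using pos by (metis exp_le_cancel_iff exp_ln)
  then have "exp (-l) * (1 + q * (exp (2 * l) - 1)) \<le> exp (-l) * exp (2 * l * q + l\<^sup>2 / 2)"
    by simp
  also have "\<dots> = exp (l * (2 * q - 1) + l\<^sup>2 / 2)"
    by (simp add: algebra_simps flip: exp_add)
  finally show ?thesis
    by (simp only: mgf mean)
qed

lemma real_card_filter_eq_sum:
  assumes "finite A"
  shows "real (card {a \<in> A. Q a}) = (\<Sum>a\<in>A. if Q a then 1 else 0)"
  using assms by (simp add: sum.If_cases Int_def conj_commute)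

lemma sum_visits_eq_Nmi:
  "(\<Sum>t\<in>{1..T}. if x (m, t - 1) = i then 1 else 0) = Nmi T x m i"
  unfolding Nmi_def by (rule real_card_filter_eq_sum[symmetric]) simp

lemma sum_transitions_from_eq_Nij:
  fixes x :: "nat \<times> nat \<Rightarrow> 'a::finite" and g :: "'a \<Rightarrow> real"
  shows "(\<Sum>m\<in>{1..M}. \<Sum>t\<in>{1..T}. if x (m, t - 1) = i then g (x (m, t)) else 0)
       = (\<Sum>j\<in>UNIV. g j * Nij M T x i j)"
proof -
  have "Nij M T x i j
      = (\<Sum>m\<in>{1..M}. \<Sum>t\<in>{1..T}. if x (m, t - 1) = i \<and> x (m, t) = j then 1 else 0)" for j
  proof -
    have "{(m, t). m \<in> {1..M} \<and> t \<in> {1..T} \<and> x (m, t - 1) = i \<and> x (m, t) = j}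
        = {p \<in> {1..M} \<times> {1..T}. case p of (m, t) \<Rightarrow> x (m, t - 1) = i \<and> x (m, t) = j}"
      by auto
    then show ?thesis
      unfolding Nij_def sum.cartesian_product
      by (simp add: real_card_filter_eq_sum case_prod_unfold)
  qed
  then have "(\<Sum>j\<in>UNIV. g j * Nij M T x i j)
      = (\<Sum>j\<in>UNIV. \<Sum>m\<in>{1..M}. \<Sum>t\<in>{1..T}. if x (m, t - 1) = i \<and> x (m, t) = j then g j else 0)"
    by (simp add: sum_distrib_left if_distrib cong: if_cong)
  also have "\<dots> = (\<Sum>m\<in>{1..M}. \<Sum>t\<in>{1..T}. \<Sum>j\<in>UNIV.
                      if x (m, t - 1) = i \<and> x (m, t) = j then g j else 0)"
    by (subst sum.swap) (simp only: sum.swap[of _ UNIV])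
  also have "\<dots> = (\<Sum>m\<in>{1..M}. \<Sum>t\<in>{1..T}. if x (m, t - 1) = i then g (x (m, t)) else 0)"
    by (intro sum.cong refl) auto
  finally show ?thesis ..
qed

definition deviation_sum ::
    "(nat \<Rightarrow> 'a \<Rightarrow> 'a \<Rightarrow> real) \<Rightarrow> nat \<Rightarrow> nat \<Rightarrow> (nat \<times> nat \<Rightarrow> 'a::finite) \<Rightarrow> 'a \<Rightarrow> ('a \<Rightarrow> real) \<Rightarrow> real"
  where "deviation_sum P M T x i \<sigma> =
    (\<Sum>j\<in>UNIV. \<sigma> j * (Nij M T x i j - (\<Sum>m\<in>{1..M}. Nmi T x m i * P m i j)))"

lemma prod_transition_weights_eq_exp:
  fixes x :: "nat \<times> nat \<Rightarrow> 'a::finite"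
  shows "(\<Prod>m\<in>{1..M}. \<Prod>t\<in>{1..T}. if x (m, t - 1) = i
            then exp (l * (\<sigma> (x (m, t)) - (\<Sum>b\<in>UNIV. P m i b * \<sigma> b)) - l\<^sup>2 / 2) else 1)
       = exp (l * deviation_sum P M T x i \<sigma> - l\<^sup>2 / 2 * Ni M T x i)"
proof -
  define c where "c m = (\<Sum>b\<in>UNIV. P m i b * \<sigma> b)" for m
  have "(if x (m, t - 1) = i then exp (l * (\<sigma> (x (m, t)) - c m) - l\<^sup>2 / 2) else 1)
      = exp (l * (if x (m, t - 1) = i then \<sigma> (x (m, t)) else 0)
             - (l * c m + l\<^sup>2 / 2) * (if x (m, t - 1) = i then 1 else 0))" for m t
    by (simp add: algebra_simps)
  then have "(\<Prod>m\<in>{1..M}. \<Prod>t\<in>{1..T}. if x (m, t - 1) = i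
                then exp (l * (\<sigma> (x (m, t)) - c m) - l\<^sup>2 / 2) else 1)
      = exp (\<Sum>m\<in>{1..M}. \<Sum>t\<in>{1..T}. l * (if x (m, t - 1) = i then \<sigma> (x (m, t)) else 0)
             - (l * c m + l\<^sup>2 / 2) * (if x (m, t - 1) = i then 1 else 0))"
    by (simp add: exp_sum)
  also have "(\<Sum>m\<in>{1..M}. \<Sum>t\<in>{1..T}. l * (if x (m, t - 1) = i then \<sigma> (x (m, t)) else 0)
             - (l * c m + l\<^sup>2 / 2) * (if x (m, t - 1) = i then 1 else 0))
      = l * (\<Sum>j\<in>UNIV. \<sigma> j * Nij M T x i j) - (\<Sum>m\<in>{1..M}. (l * c m + l\<^sup>2 / 2) * Nmi T x m i)"
    by (simp only: sum_subtractf sum_distrib_left[symmetric] sum_visits_eq_Nmi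
        sum_transitions_from_eq_Nij)
  also have "\<dots> = l * deviation_sum P M T x i \<sigma> - l\<^sup>2 / 2 * Ni M T x i"
  proof -
    have dev: "deviation_sum P M T x i \<sigma>
        = (\<Sum>j\<in>UNIV. \<sigma> j * Nij M T x i j) - (\<Sum>m\<in>{1..M}. Nmi T x m i * c m)"
      unfolding deviation_sum_def c_def
      by (simp add: right_diff_distrib sum_subtractf sum_distrib_left sum.swap[of _ UNIV] mult_ac)
    have weights: "(\<Sum>m\<in>{1..M}. (l * c m + l\<^sup>2 / 2) * Nmi T x m i)
        = l * (\<Sum>m\<in>{1..M}. Nmi T x m i * c m) + l\<^sup>2 / 2 * Ni M T x i"
      unfolding Ni_def by (simp add: algebra_simps sum.distrib sum_distrib_left)
    show ?thesis
      by (simp only: dev weights) (simp add: algebra_simps)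
  qed
  finally show ?thesis
    unfolding c_def .
qed

lemma expectation_exp_deviation_sum_le_1:
  fixes mu :: "nat \<Rightarrow> 'a::finite \<Rightarrow> real" and P :: "nat \<Rightarrow> 'a \<Rightarrow> 'a \<Rightarrow> real"
  assumes mu_nonneg: "\<And>m a. m \<in> {1..M} \<Longrightarrow> mu m a \<ge> 0"
    and mu_sum: "\<And>m. m \<in> {1..M} \<Longrightarrow> (\<Sum>a\<in>UNIV. mu m a) = 1"
    and P_nonneg: "\<And>m a b. m \<in> {1..M} \<Longrightarrow> P m a b \<ge> 0"
    and P_sum: "\<And>m a. m \<in> {1..M} \<Longrightarrow> (\<Sum>b\<in>UNIV. P m a b) = 1"
    and \<sigma>: "\<And>j. \<sigma> j \<in> {-1, 1}" and "l \<ge> 0"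
  shows "(\<Sum>x\<in>arrays M T. array_law mu P M T x *
            exp (l * deviation_sum P M T x i \<sigma> - l\<^sup>2 / 2 * Ni M T x i)) \<le> 1"
proof -
  define c where "c m = (\<Sum>b\<in>UNIV. P m i b * \<sigma> b)" for m
  define w where "w m a b = (if a = i then exp (l * (\<sigma> b - c m) - l\<^sup>2 / 2) else 1)" for m a b
  have "(\<Sum>b\<in>UNIV. P m a b * w m a b) \<le> 1" if m: "m \<in> {1..M}" for m a
  proof (cases "a = i")
    case True
    have "(\<Sum>b\<in>UNIV. P m a b * w m a b)
        = (\<Sum>b\<in>UNIV. P m i b * exp (l * \<sigma> b)) * exp (- (l * c m) - l\<^sup>2 / 2)"
      unfolding w_def True by (simp add: sum_distrib_right algebra_simps flip: exp_add)
    also have "\<dots> \<le> exp (l * c m + l\<^sup>2 / 2) * exp (- (l * c m) - l\<^sup>2 / 2)"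
      unfolding c_def using sign_mgf_le[of UNIV "P m i" \<sigma> l] P_nonneg P_sum m \<sigma> \<open>l \<ge> 0\<close>
      by (intro mult_right_mono) auto
    also have "\<dots> = 1"
      by (simp flip: exp_add)
    finally show ?thesis .
  next
    case False
    then show ?thesis
      using P_sum[OF m] by (simp add: w_def)
  qed
  then have "(\<Sum>x\<in>arrays M T. array_law mu P M T x *
               (\<Prod>m\<in>{1..M}. \<Prod>t\<in>{1..T}. w m (x (m, t - 1)) (x (m, t)))) \<le> 1"
    using mu_nonneg mu_sum P_nonneg by (intro array_law_weighted_sum_le_1) (auto simp: w_def)
  then show ?thesis
    unfolding w_def c_def prod_transition_weights_eq_exp .
qed

lemma Ni_mult_l1_dist_eq_deviation_sum:
  assumes "Ni M T x i > 0"
  shows "Ni M T x i * (\<Sum>j\<in>UNIV. \<bar>Phat M T x i j - Ptilde P M T x i j\<bar>)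
       = deviation_sum P M T x i (\<lambda>j. if Ptilde P M T x i j \<le> Phat M T x i j then 1 else -1)"
proof -
  have "Phat M T x i j - Ptilde P M T x i j
      = (Nij M T x i j - (\<Sum>m\<in>{1..M}. Nmi T x m i * P m i j)) / Ni M T x i" for j
    using assms unfolding Phat_def Ptilde_def by (simp add: diff_divide_distrib sum_divide_distrib)
  then have scaled: "Ni M T x i * (Phat M T x i j - Ptilde P M T x i j)
      = Nij M T x i j - (\<Sum>m\<in>{1..M}. Nmi T x m i * P m i j)" for j
    using assms by simp
  have "Ni M T x i * \<bar>Phat M T x i j - Ptilde P M T x i j\<bar>
      = (if Ptilde P M T x i j \<le> Phat M T x i j then 1 else -1)
          * (Ni M T x i * (Phat M T x i j - Ptilde P M T x i j))"
    for j by (simp add: abs_if)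
  then show ?thesis
    unfolding deviation_sum_def sum_distrib_left by (intro sum.cong refl) (simp only: scaled)
qed

lemma array_prob_mono:
  assumes "\<And>m a. m \<in> {1..M} \<Longrightarrow> mu m a \<ge> 0" and "\<And>m a b. m \<in> {1..M} \<Longrightarrow> P m a b \<ge> 0"
    and "\<And>x. E x \<Longrightarrow> F x"
  shows "array_prob mu P M T E \<le> array_prob mu P M T F"
  unfolding array_prob_def using assms array_law_nonneg[OF assms(1,2)] by (intro sum_mono) auto

lemma array_prob_le_1:
  fixes mu :: "nat \<Rightarrow> 'a::finite \<Rightarrow> real"
  assumes mu_nonneg: "\<And>m a. m \<in> {1..M} \<Longrightarrow> mu m a \<ge> 0"
    and mu_sum: "\<And>m. m \<in> {1..M} \<Longrightarrow> (\<Sum>a\<in>UNIV. mu m a) = 1"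
    and P_nonneg: "\<And>m a b. m \<in> {1..M} \<Longrightarrow> P m a b \<ge> 0"
    and P_sum: "\<And>m a. m \<in> {1..M} \<Longrightarrow> (\<Sum>b\<in>UNIV. P m a b) = 1"
  shows "array_prob mu P M T E \<le> 1"
proof -
  have "array_prob mu P M T E \<le> array_prob mu P M T (\<lambda>_. True)"
    using mu_nonneg P_nonneg by (intro array_prob_mono) auto
  also have "\<dots> = (\<Sum>x\<in>arrays M T. array_law mu P M T x *
                    (\<Prod>m\<in>{1..M}. \<Prod>t\<in>{1..T}. (\<lambda>_ _ _. 1) m (x (m, t - 1)) (x (m, t))))"
    by (simp add: array_prob_def)
  also have "\<dots> \<le> 1"
    using assms by (intro array_law_weighted_sum_le_1) auto
  finally show ?thesis .
qed

lemma array_prob_l1_deviation_le: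
  fixes mu :: "nat \<Rightarrow> 'a::finite \<Rightarrow> real"
  assumes mu_nonneg: "\<And>m a. m \<in> {1..M} \<Longrightarrow> mu m a \<ge> 0"
    and mu_sum: "\<And>m. m \<in> {1..M} \<Longrightarrow> (\<Sum>a\<in>UNIV. mu m a) = 1"
    and P_nonneg: "\<And>m a b. m \<in> {1..M} \<Longrightarrow> P m a b \<ge> 0"
    and P_sum: "\<And>m a. m \<in> {1..M} \<Longrightarrow> (\<Sum>b\<in>UNIV. P m a b) = 1"
    and "\<epsilon> \<ge> 0" and "s > 0"
  shows "array_prob mu P M T
           (\<lambda>x. \<epsilon> \<le> (\<Sum>j\<in>UNIV. \<bar>Phat M T x i j - Ptilde P M T x i j\<bar>) \<and> s \<le> Ni M T x i)
         \<le> 2 ^ CARD('a) * exp (- (\<epsilon>\<^sup>2 * s / 2))"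
proof -
  define law where "law = array_law mu P M T"
  define \<sigma> where "\<sigma> S = (\<lambda>j::'a. if j \<in> S then 1 else -1 :: real)" for S
  define W where "W S x = exp (\<epsilon> * deviation_sum P M T x i (\<sigma> S) - \<epsilon>\<^sup>2 / 2 * Ni M T x i)" for S x
  define E where "E x \<longleftrightarrow> \<epsilon> \<le> (\<Sum>j\<in>UNIV. \<bar>Phat M T x i j - Ptilde P M T x i j\<bar>) \<and> s \<le> Ni M T x i"
    for x
  have law_nonneg: "law x \<ge> 0" for x
    unfolding law_def using mu_nonneg P_nonneg by (rule array_law_nonneg)
  have "1 \<le> (\<Sum>S\<in>Pow UNIV. W S x) * exp (- (\<epsilon>\<^sup>2 * s / 2))" if "E x" for x
  proof -
    define S where "S = {j. Ptilde P M T x i j \<le> Phat M T x i j}"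
    from \<open>E x\<close> have l1: "\<epsilon> \<le> (\<Sum>j\<in>UNIV. \<bar>Phat M T x i j - Ptilde P M T x i j\<bar>)"
      and visits: "s \<le> Ni M T x i"
      unfolding E_def by auto
    with \<open>s > 0\<close> have "Ni M T x i > 0" by linarith
    from Ni_mult_l1_dist_eq_deviation_sum[OF this, of P]
    have "deviation_sum P M T x i (\<sigma> S)
        = Ni M T x i * (\<Sum>j\<in>UNIV. \<bar>Phat M T x i j - Ptilde P M T x i j\<bar>)"
      by (simp add: \<sigma>_def S_def)
    with l1 \<open>Ni M T x i > 0\<close> have "\<epsilon> * Ni M T x i \<le> deviation_sum P M T x i (\<sigma> S)"
      by (simp add: mult.commute)
    then have "\<epsilon>\<^sup>2 * s / 2 \<le> \<epsilon> * deviation_sum P M T x i (\<sigma> S) - \<epsilon>\<^sup>2 / 2 * Ni M T x i"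
      using visits \<open>\<epsilon> \<ge> 0\<close> mult_left_mono[of _ _ \<epsilon>] mult_left_mono[OF visits, of "\<epsilon>\<^sup>2"]
      by (fastforce simp: power2_eq_square algebra_simps)
    then have "1 \<le> W S x * exp (- (\<epsilon>\<^sup>2 * s / 2))"
      by (simp add: W_def flip: exp_add)
    also have "\<dots> \<le> (\<Sum>S\<in>Pow UNIV. W S x) * exp (- (\<epsilon>\<^sup>2 * s / 2))"
      by (intro mult_right_mono member_le_sum) (auto simp: W_def)
    finally show ?thesis .
  qed
  then have "(if E x then law x else 0)
      \<le> law x * ((\<Sum>S\<in>Pow UNIV. W S x) * exp (- (\<epsilon>\<^sup>2 * s / 2)))" for x
    using law_nonneg[of x]
    by (auto simp: W_def intro!: mult_nonneg_nonneg sum_nonneg mult_le_cancel_left1[THEN iffD2])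
  then have "array_prob mu P M T E
      \<le> (\<Sum>x\<in>arrays M T. law x * ((\<Sum>S\<in>Pow UNIV. W S x) * exp (- (\<epsilon>\<^sup>2 * s / 2))))"
    unfolding array_prob_def law_def[symmetric] by (rule sum_mono)
  also have "\<dots> = (\<Sum>x\<in>arrays M T. \<Sum>S\<in>Pow UNIV. law x * W S x) * exp (- (\<epsilon>\<^sup>2 * s / 2))"
    by (simp add: sum_distrib_left sum_distrib_right mult.assoc)
  also have "\<dots> = (\<Sum>S\<in>Pow UNIV. \<Sum>x\<in>arrays M T. law x * W S x) * exp (- (\<epsilon>\<^sup>2 * s / 2))"
    by (subst sum.swap) (rule refl)
  also have "\<dots> \<le> (\<Sum>S\<in>Pow (UNIV::'a set). 1) * exp (- (\<epsilon>\<^sup>2 * s / 2))"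
    unfolding law_def W_def using assms
    by (intro mult_right_mono sum_mono expectation_exp_deviation_sum_le_1) (auto simp: \<sigma>_def)
  also have "(\<Sum>S\<in>Pow (UNIV::'a set). 1) = (2::real) ^ CARD('a)"
    by (simp add: card_Pow del: Pow_UNIV)
  finally show ?thesis
    unfolding E_def .
qed

lemma min_1_two_pow_exp_le:
  fixes n :: nat and x :: real
  assumes "n \<ge> 1"
  shows "min 1 (2 ^ n * exp (- x / 2)) \<le> (1 + real n) * exp (- x / (2 * sqrt 2 * n))"
proof -
  define y where "y = x / (2 * sqrt 2 * n)"
  have ln_1n: "ln 2 \<le> ln (1 + real n)"
    using assms by simp
  show ?thesis
  proof (cases "y \<le> ln (1 + n)")
    case True
    have "1 = (1 + n) * exp (- ln (1 + n))"
      by (simp add: exp_minus)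
    also have "\<dots> \<le> (1 + n) * exp (- y)"
      using True by simp
    finally show ?thesis
      by (simp add: y_def)
  next
    case False
    have "sqrt 2 * 1 \<le> sqrt 2 * n"
      using assms by (intro mult_left_mono) auto
    then have "sqrt 2 * n > 1"
      using real_sqrt_gt_1_iff[of 2] by linarith
    then have "(sqrt 2 * n - 1) * ln (1 + n) \<le> (sqrt 2 * n - 1) * y"
      using False by simp
    moreover have "n * ln 2 \<le> sqrt 2 * n * ln (1 + n)"
    proof -
      have "1 * ln 2 \<le> sqrt 2 * ln (1 + real n)"
        using ln_1n by (intro mult_mono) auto
      then show ?thesis
        using mult_left_mono[of "ln 2" "sqrt 2 * ln (1 + real n)" n] by (simp add: mult_ac)
    qed
    moreover have "x / 2 = sqrt 2 * n * y"
      using assms by (simp add: y_def)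
    ultimately have "n * ln 2 - x / 2 \<le> ln (1 + n) - y"
      by (simp add: algebra_simps)
    then have "exp (n * ln 2 - x / 2) \<le> exp (ln (1 + n) - y)"
      by simp
    moreover have "exp (n * ln 2 - x / 2) = 2 ^ n * exp (- x / 2)"
      unfolding diff_conv_add_uminus exp_add exp_of_nat_mult by simp
    moreover have "exp (ln (1 + n) - y) = (1 + n) * exp (- y)"
      by (simp add: exp_diff exp_minus field_simps)
    ultimately have "2 ^ n * exp (- x / 2) \<le> (1 + n) * exp (- y)"
      by simp
    then show ?thesis
      by (simp add: y_def)
  qed
qed

lemma min_1_two_pow_exp_le_ratio_bound:
  fixes n :: nat and \<epsilon> s1 s2 :: real
  assumes "n \<ge> 1" and "\<epsilon> \<ge> 0" and "0 < s1" and "s1 \<le> s2"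
  shows "min 1 (2 ^ n * exp (- (\<epsilon>\<^sup>2 * s1) / 2))
           \<le> (1 + real n) * exp (- (3 * \<epsilon>^2 * s1) /
                (6 * sqrt 2 * n * s2 / s1 + 2 * sqrt 2 * sqrt n * \<epsilon>))"
proof -
  have pos: "0 < 6 * sqrt 2 * n"
    using assms by simp
  have "6 * sqrt 2 * n \<le> 6 * sqrt 2 * n * s2 / s1"
    using assms by (simp add: pos_le_divide_eq mult_left_mono)
  moreover have "0 \<le> 2 * sqrt 2 * sqrt n * \<epsilon>"
    using assms by simp
  ultimately have denom: "6 * sqrt 2 * n \<le> 6 * sqrt 2 * n * s2 / s1 + 2 * sqrt 2 * sqrt n * \<epsilon>"
    by linarith
  have "3 * \<epsilon>\<^sup>2 * s1 / (6 * sqrt 2 * n * s2 / s1 + 2 * sqrt 2 * sqrt n * \<epsilon>)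
      \<le> 3 * \<epsilon>\<^sup>2 * s1 / (6 * sqrt 2 * n)"
    using assms
    by (intro divide_left_mono[OF denom] mult_pos_pos pos order.strict_trans2[OF pos denom]) auto
  also have "\<dots> = \<epsilon>\<^sup>2 * s1 / (2 * sqrt 2 * n)"
    by (simp add: field_simps)
  finally have "(1 + real n) * exp (- (\<epsilon>\<^sup>2 * s1) / (2 * sqrt 2 * n))
      \<le> (1 + real n) * exp (- (3 * \<epsilon>^2 * s1) /
            (6 * sqrt 2 * n * s2 / s1 + 2 * sqrt 2 * sqrt n * \<epsilon>))"
    by (intro mult_left_mono) auto
  with min_1_two_pow_exp_le[OF \<open>n \<ge> 1\<close>] show ?thesis
    by (rule order.trans)
qed

theorem proposition6p4:
  fixes mu :: "nat \<Rightarrow> 'a::finite \<Rightarrow> real"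
    and P :: "nat \<Rightarrow> 'a \<Rightarrow> 'a \<Rightarrow> real"
    and M T :: nat
    and i :: 'a
    and \<epsilon> s1 s2 :: real
  assumes "M \<ge> 1" and "T \<ge> 1"
    and mu_nonneg: "\<And>m a. m \<in> {1..M} \<Longrightarrow> mu m a \<ge> 0"
    and mu_sum: "\<And>m. m \<in> {1..M} \<Longrightarrow> (\<Sum>a\<in>UNIV. mu m a) = 1"
    and P_nonneg: "\<And>m a b. m \<in> {1..M} \<Longrightarrow> P m a b \<ge> 0"
    and P_sum: "\<And>m a. m \<in> {1..M} \<Longrightarrow> (\<Sum>b\<in>UNIV. P m a b) = 1"
    and "\<epsilon> > 0" and "0 < s1" and "s1 \<le> s2"
  shows "array_prob mu P M T
           (\<lambda>x. (\<Sum>j\<in>UNIV. \<bar>Phat M T x i j - Ptilde P M T x i j\<bar>) \<ge> \<epsilon>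
                 \<and> s1 \<le> Ni M T x i \<and> Ni M T x i \<le> s2)
         \<le> (1 + real (card (UNIV::'a set))) *
           exp (- (3 * \<epsilon>^2 * s1) /
                (6 * sqrt 2 * real (card (UNIV::'a set)) * s2 / s1 + 2 * sqrt 2 * sqrt (real (card (UNIV::'a set))) * \<epsilon>))"
proof -
  let ?E = "\<lambda>x. (\<Sum>j\<in>UNIV. \<bar>Phat M T x i j - Ptilde P M T x i j\<bar>) \<ge> \<epsilon>
                 \<and> s1 \<le> Ni M T x i \<and> Ni M T x i \<le> s2"
  have "array_prob mu P M T ?E \<le> min 1 (2 ^ CARD('a) * exp (- (\<epsilon>\<^sup>2 * s1) / 2))"
  proof (rule min.boundedI)
    show "array_prob mu P M T ?E \<le> 1"
      using mu_nonneg mu_sum P_nonneg P_sum by (rule array_prob_le_1)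
    have "array_prob mu P M T ?E \<le> array_prob mu P M T
            (\<lambda>x. \<epsilon> \<le> (\<Sum>j\<in>UNIV. \<bar>Phat M T x i j - Ptilde P M T x i j\<bar>) \<and> s1 \<le> Ni M T x i)"
      using mu_nonneg P_nonneg by (intro array_prob_mono) auto
    also have "\<dots> \<le> 2 ^ CARD('a) * exp (- (\<epsilon>\<^sup>2 * s1) / 2)"
      using array_prob_l1_deviation_le[OF mu_nonneg mu_sum P_nonneg P_sum] assms by simp
    finally show "array_prob mu P M T ?E \<le> 2 ^ CARD('a) * exp (- (\<epsilon>\<^sup>2 * s1) / 2)" .
  qed
  also have "\<dots> \<le> (1 + real CARD('a)) * exp (- (3 * \<epsilon>^2 * s1) /
                (6 * sqrt 2 * CARD('a) * s2 / s1 + 2 * sqrt 2 * sqrt CARD('a) * \<epsilon>))"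
    using finite_UNIV_card_ge_0[where 'a='a] assms by (intro min_1_two_pow_exp_le_ratio_bound) auto
  finally show ?thesis .
qed

end
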